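(* Let $p\colon X\to Y$ be an approximately invertible continuous surjection between (Tychonoff) spaces. If $X$ is a finite $C$-space, then so is $Y$.
   Context: A set is functionally open if it is a cozero set. $X$ is a finite $C$-space if for every sequence $\{\omega_n\}$ of finite covers of $X$ by functionally open sets there exist $k$ and finite families $\gamma_1,\dots,\gamma_k$ of pairwise disjoint functionally open sets such that each $\gamma_n$ refines $\omega_n$ and $\bigcup_{n=1}^k\gamma_n$ covers $X$. A map $p\colon X\to Y$ is approximately invertible if there exists a $C^*$-embedding $i\colon X\to Z$ into a space $Z$ such that for every collection $\mathcal W$ of open subsets of $Z$ refined by $\{i(p^{-1}(y)):y\in Y\}$, there is a continuous map $g\colon Y\to Z$ with $g\circ p$ $\mathcal W$-close to $i$, i.e. each set $\{g(p(x)),i(x)\}$, $x\in X$, is contained in some member of $\mathcal W$. *)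

theory Defs
  imports "HOL-Analysis.Analysis"
begin

definition tychonoff_space :: "'a topology \<Rightarrow> bool" where
  "tychonoff_space X \<longleftrightarrow> completely_regular_space X \<and> Hausdorff_space X"

definition functionally_open :: "'a topology \<Rightarrow> 'a set \<Rightarrow> bool" where
  "functionally_open X U \<longleftrightarrow>
     (\<exists>f. continuous_map X euclideanreal f \<and> U = {x \<in> topspace X. f x \<noteq> 0})"

definition refines :: "'a set set \<Rightarrow> 'a set set \<Rightarrow> bool" where
  "refines \<gamma> \<omega> \<longleftrightarrow> (\<forall>G\<in>\<gamma>. \<exists>W\<in>\<omega>. G \<subseteq> W)"

definition finite_C_space :: "'a topology \<Rightarrow> bool" where
  "finite_C_space X \<longleftrightarrow>
     (\<forall>\<omega> :: nat \<Rightarrow> 'a set set.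
        (\<forall>n. finite (\<omega> n) \<and> (\<forall>U\<in>\<omega> n. functionally_open X U) \<and> \<Union>(\<omega> n) = topspace X)
        \<longrightarrow> (\<exists>k. \<exists>\<gamma> :: nat \<Rightarrow> 'a set set.
               (\<forall>n<k. finite (\<gamma> n) \<and> (\<forall>U\<in>\<gamma> n. functionally_open X U)
                      \<and> pairwise disjnt (\<gamma> n) \<and> refines (\<gamma> n) (\<omega> n))
               \<and> topspace X \<subseteq> \<Union>(\<Union>n<k. \<gamma> n)))"

definition C_star_embedding :: "'a topology \<Rightarrow> 'z topology \<Rightarrow> ('a \<Rightarrow> 'z) \<Rightarrow> bool" where
  "C_star_embedding X Z i \<longleftrightarrow> embedding_map X Z i \<and>
     (\<forall>f. continuous_map (subtopology Z (i ` topspace X)) euclideanreal f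
          \<and> bounded (f ` (i ` topspace X))
          \<longrightarrow> (\<exists>g. continuous_map Z euclideanreal g \<and> bounded (g ` topspace Z)
                   \<and> (\<forall>z\<in>i ` topspace X. g z = f z)))"

definition approx_invertible ::
    "'a topology \<Rightarrow> 'b topology \<Rightarrow> ('a \<Rightarrow> 'b) \<Rightarrow> 'z topology \<Rightarrow> ('a \<Rightarrow> 'z) \<Rightarrow> bool" where
  "approx_invertible X Y p Z i \<longleftrightarrow> tychonoff_space Z \<and> C_star_embedding X Z i \<and>
     (\<forall>\<W>. (\<forall>V\<in>\<W>. openin Z V)
           \<and> refines ((\<lambda>y. i ` {x \<in> topspace X. p x = y}) ` topspace Y) \<W>
           \<longrightarrow> (\<exists>g. continuous_map Y Z g \<and>
                    (\<forall>x\<in>topspace X. \<exists>V\<in>\<W>. {g (p x), i x} \<subseteq> V)))"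

end

(* Pull a sequence of finite cozero covers omega_n of Y back along p and let gamma_n (n < k)
   be the disjoint cozero refinements provided by the finite C-property of X.  Through the
   C*-embedding i, the members G of each gamma_n extend to pairwise disjoint cozero sets U_G of Z
   with i(G) inside U_G, and each G lies over some W_G in omega_n.  Approximate invertibility,
   applied to suitable neighbourhoods of the fibres i(p^-1 y), yields g : Y -> Z such that the
   intersections of g^-1(U_G) with W_G form disjoint cozero refinements of the omega_n
   covering Y. *)

theory Submission
  imports Defs
begin

definition cozero_cover :: "'a topology \<Rightarrow> 'a set set \<Rightarrow> bool" where
  "cozero_cover X \<U> \<longleftrightarrow> finite \<U> \<and> (\<forall>U\<in>\<U>. functionally_open X U) \<and> \<Union>\<U> = topspace X"

definition disjoint_cozero_refinement ::
    "'a topology \<Rightarrow> nat \<Rightarrow> (nat \<Rightarrow> 'a set set) \<Rightarrow> (nat \<Rightarrow> 'a set set) \<Rightarrow> bool" where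
  "disjoint_cozero_refinement X k \<omega> \<gamma> \<longleftrightarrow>
     (\<forall>n<k. finite (\<gamma> n) \<and> (\<forall>U\<in>\<gamma> n. functionally_open X U)
            \<and> pairwise disjnt (\<gamma> n) \<and> refines (\<gamma> n) (\<omega> n))
     \<and> topspace X \<subseteq> \<Union>(\<Union>n<k. \<gamma> n)"

lemma finite_C_spaceI:
  assumes "\<And>\<omega>. (\<And>n. cozero_cover X (\<omega> n)) \<Longrightarrow> \<exists>k \<gamma>. disjoint_cozero_refinement X k \<omega> \<gamma>"
  shows "finite_C_space X"
  using assms unfolding finite_C_space_def cozero_cover_def disjoint_cozero_refinement_def by blast

lemma finite_C_spaceD:
  assumes "finite_C_space X" "\<And>n. cozero_cover X (\<omega> n)"
  shows "\<exists>k \<gamma>. disjoint_cozero_refinement X k \<omega> \<gamma>"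
  using assms unfolding finite_C_space_def cozero_cover_def disjoint_cozero_refinement_def by blast

lemma functionally_open_imp_openin:
  assumes "functionally_open X U"
  shows "openin X U"
proof -
  obtain f where f: "continuous_map X euclideanreal f" "U = {x \<in> topspace X. f x \<in> - {0}}"
    using assms unfolding functionally_open_def by auto
  then show ?thesis
    using openin_continuous_map_preimage[OF f(1), of "- {0}"] by (simp add: open_Compl)
qed

lemma functionally_open_Int:
  assumes "functionally_open X A" "functionally_open X B"
  shows "functionally_open X (A \<inter> B)"
proof -
  obtain f g where f: "continuous_map X euclideanreal f" "A = {x \<in> topspace X. f x \<noteq> 0}"
    and g: "continuous_map X euclideanreal g" "B = {x \<in> topspace X. g x \<noteq> 0}"
    using assms unfolding functionally_open_def by blast
  have "continuous_map X euclideanreal (\<lambda>x. f x * g x)"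
    using f g by (intro continuous_intros)
  moreover have "A \<inter> B = {x \<in> topspace X. f x * g x \<noteq> 0}"
    using f g by auto
  ultimately show ?thesis
    unfolding functionally_open_def by blast
qed

lemma functionally_open_preimage:
  assumes "continuous_map X Y q" "functionally_open Y U"
  shows "functionally_open X {x \<in> topspace X. q x \<in> U}"
proof -
  obtain f where f: "continuous_map Y euclideanreal f" "U = {y \<in> topspace Y. f y \<noteq> 0}"
    using assms(2) unfolding functionally_open_def by blast
  have "continuous_map X euclideanreal (f \<circ> q)"
    using f(1) assms(1) continuous_map_compose by blast
  moreover have "{x \<in> topspace X. q x \<in> U} = {x \<in> topspace X. (f \<circ> q) x \<noteq> 0}"
    using f(2) assms(1) by (auto simp: continuous_map_def)
  ultimately show ?thesis
    unfolding functionally_open_def by blast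
qed

lemma functionally_open_Collect_less:
  assumes "continuous_map X euclideanreal f" "continuous_map X euclideanreal g"
  shows "functionally_open X {x \<in> topspace X. f x < g x}"
proof -
  have "continuous_map X euclideanreal (\<lambda>x. max 0 (g x - f x))"
    using assms by (intro continuous_intros)
  moreover have "{x \<in> topspace X. f x < g x} = {x \<in> topspace X. max 0 (g x - f x) \<noteq> 0}"
    by auto
  ultimately show ?thesis
    unfolding functionally_open_def by blast
qed

lemma cozero_cover_preimage:
  assumes "continuous_map X Y p" "cozero_cover Y \<U>"
  shows "cozero_cover X ((\<lambda>U. {x \<in> topspace X. p x \<in> U}) ` \<U>)"
proof -
  have "\<Union>((\<lambda>U. {x \<in> topspace X. p x \<in> U}) ` \<U>) = topspace X"
    using assms by (auto simp: cozero_cover_def continuous_map_def)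
  then show ?thesis
    using assms functionally_open_preimage[OF assms(1)] by (auto simp: cozero_cover_def)
qed

lemma embedding_map_imp_continuous_map:
  assumes "embedding_map X Z i"
  shows "continuous_map X Z i"
  using assms homeomorphic_imp_continuous_map continuous_map_in_subtopology
  unfolding embedding_map_def by blast

lemma embedding_map_openin_extend:
  assumes "embedding_map X Z i" "openin X A"
  shows "\<exists>H. openin Z H \<and> (\<forall>x\<in>topspace X. i x \<in> H \<longleftrightarrow> x \<in> A)"
proof -
  have hom: "homeomorphic_map X (subtopology Z (i ` topspace X)) i"
    using assms(1) unfolding embedding_map_def .
  then have "openin (subtopology Z (i ` topspace X)) (i ` A)"
    using assms(2) homeomorphic_map_openness_eq by blast
  then obtain H where H: "openin Z H" "i ` A = H \<inter> i ` topspace X"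
    by (auto simp: openin_subtopology)
  have "inj_on i (topspace X)"
    using hom homeomorphic_imp_injective_map by blast
  have "A \<subseteq> topspace X"
    using assms(2) openin_subset by blast
  have "\<forall>x\<in>topspace X. i x \<in> H \<longleftrightarrow> x \<in> A"
  proof
    fix x assume x: "x \<in> topspace X"
    have "i x \<in> H \<longleftrightarrow> i x \<in> i ` A"
      using H(2) x by blast
    also have "\<dots> \<longleftrightarrow> x \<in> A"
      using inj_on_image_mem_iff[OF \<open>inj_on i (topspace X)\<close> x \<open>A \<subseteq> topspace X\<close>] .
    finally show "i x \<in> H \<longleftrightarrow> x \<in> A" .
  qed
  with H(1) show ?thesis
    by blast
qed

lemma C_star_embedding_extend:
  assumes "C_star_embedding X Z i" "continuous_map X euclideanreal f" "bounded (f ` topspace X)"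
  shows "\<exists>F. continuous_map Z euclideanreal F \<and> (\<forall>x\<in>topspace X. F (i x) = f x)"
proof -
  have "homeomorphic_map X (subtopology Z (i ` topspace X)) i"
    using assms(1) unfolding C_star_embedding_def embedding_map_def by blast
  then obtain j where "homeomorphic_maps X (subtopology Z (i ` topspace X)) i j"
    by (auto simp: homeomorphic_map_maps)
  then have j: "continuous_map (subtopology Z (i ` topspace X)) X j"
    and ji: "\<And>x. x \<in> topspace X \<Longrightarrow> j (i x) = x"
    by (auto simp: homeomorphic_maps_def)
  have "continuous_map (subtopology Z (i ` topspace X)) euclideanreal (f \<circ> j)"
    using j assms(2) continuous_map_compose by blast
  moreover have "(f \<circ> j) ` i ` topspace X = f ` topspace X"
    using ji by (force simp: image_comp)
  ultimately obtain F where "continuous_map Z euclideanreal F" "\<forall>z\<in>i ` topspace X. F z = (f \<circ> j) z"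
    using assms(1,3) unfolding C_star_embedding_def by metis
  then show ?thesis
    using ji by auto
qed

lemma C_star_embedding_extend_cozero:
  assumes "C_star_embedding X Z i" "functionally_open X G"
  shows "\<exists>F. continuous_map Z euclideanreal F \<and> (\<forall>z. 0 \<le> F z)
             \<and> (\<forall>x\<in>topspace X. F (i x) \<noteq> 0 \<longleftrightarrow> x \<in> G)"
proof -
  obtain f where f: "continuous_map X euclideanreal f" "G = {x \<in> topspace X. f x \<noteq> 0}"
    using assms(2) unfolding functionally_open_def by blast
  have "continuous_map X euclideanreal (\<lambda>x. min 1 \<bar>f x\<bar>)"
    using f(1) by (intro continuous_intros)
  moreover have "bounded ((\<lambda>x. min 1 \<bar>f x\<bar>) ` topspace X)"
    by (rule boundedI[of _ 1]) auto
  ultimately obtain F where F: "continuous_map Z euclideanreal F"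
      "\<forall>x\<in>topspace X. F (i x) = min 1 \<bar>f x\<bar>"
    using C_star_embedding_extend[OF assms(1)] by blast
  have "continuous_map Z euclideanreal (\<lambda>z. \<bar>F z\<bar>)"
    using F(1) by (intro continuous_intros)
  then show ?thesis
    using F(2) f(2) by (intro exI[of _ "\<lambda>z. \<bar>F z\<bar>"]) auto
qed

lemma C_star_embedding_extend_disjoint_cozero:
  assumes "C_star_embedding X Z i" "finite \<G>" "\<forall>G\<in>\<G>. functionally_open X G" "pairwise disjnt \<G>"
  shows "\<exists>U. \<forall>G\<in>\<G>. functionally_open Z (U G) \<and> i ` G \<subseteq> U G
                  \<and> (\<forall>G'\<in>\<G>. G' \<noteq> G \<longrightarrow> disjnt (U G) (U G'))"
proof -
  obtain F where F: "\<And>G. G \<in> \<G> \<Longrightarrow> continuous_map Z euclideanreal (F G) \<and> (\<forall>z. 0 \<le> F G z)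
                         \<and> (\<forall>x\<in>topspace X. F G (i x) \<noteq> 0 \<longleftrightarrow> x \<in> G)"
    using C_star_embedding_extend_cozero[OF assms(1)] assms(3) by metis
  have i: "continuous_map X Z i"
    using assms(1) embedding_map_imp_continuous_map unfolding C_star_embedding_def by blast
  \<comment> \<open>Two of these sets cannot meet: a common point would make each of two nonnegative
    values exceed the other.\<close>
  define U where "U G = {z \<in> topspace Z. (\<Sum>G'\<in>\<G> - {G}. F G' z) < F G z}" for G
  have "functionally_open Z (U G)" if "G \<in> \<G>" for G
    unfolding U_def using F that assms(2) by (intro functionally_open_Collect_less continuous_intros) auto
  moreover have "i ` G \<subseteq> U G" if "G \<in> \<G>" for G
  proof
    fix z assume "z \<in> i ` G"
    then obtain x where x: "x \<in> G" "z = i x"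
      by blast
    have xX: "x \<in> topspace X"
      using x(1) that assms(3) functionally_open_imp_openin openin_subset by blast
    have "F G' (i x) = 0" if "G' \<in> \<G> - {G}" for G'
    proof -
      have "x \<notin> G'"
        using assms(4) \<open>G \<in> \<G>\<close> that x(1) by (auto simp: pairwise_def disjnt_def)
      then show ?thesis
        using F xX that by blast
    qed
    moreover have "0 < F G (i x)"
      using F[OF that] xX x(1) by (metis order_neq_le_trans)
    moreover have "i x \<in> topspace Z"
      using i xX continuous_map_image_subset_topspace by blast
    ultimately show "z \<in> U G"
      unfolding U_def x(2) by simp
  qed
  moreover have "disjnt (U G) (U G')" if "G \<in> \<G>" "G' \<in> \<G>" "G' \<noteq> G" for G G'
  proof -
    have "\<not> ((\<Sum>H\<in>\<G> - {G}. F H z) < F G z \<and> (\<Sum>H\<in>\<G> - {G'}. F H z) < F G' z)" for z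
    proof -
      have "F G' z \<le> (\<Sum>H\<in>\<G> - {G}. F H z)" "F G z \<le> (\<Sum>H\<in>\<G> - {G'}. F H z)"
        using that assms(2) F by (auto intro!: member_le_sum)
      then show ?thesis
        by linarith
    qed
    then show ?thesis
      unfolding U_def disjnt_def by blast
  qed
  ultimately show ?thesis
    by blast
qed

(* If g(p x) and i x lie in a common fibre_nbhd Z I W U H y, then g(p x) lies in some U a with
   y in W a, and i x in H a, which forces p x into W a as soon as H a traces p^-1(W a) on X. *)
definition fibre_nbhd ::
    "'z topology \<Rightarrow> 'i set \<Rightarrow> ('i \<Rightarrow> 'b set) \<Rightarrow> ('i \<Rightarrow> 'z set) \<Rightarrow> ('i \<Rightarrow> 'z set) \<Rightarrow> 'b \<Rightarrow> 'z set" where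
  "fibre_nbhd Z I W U H y =
     topspace Z \<inter> (\<Union>a\<in>{a\<in>I. y \<in> W a}. U a) \<inter> (\<Inter>a\<in>{a\<in>I. y \<in> W a}. H a)"

lemma openin_fibre_nbhd:
  assumes "finite I" "\<And>a. a \<in> I \<Longrightarrow> openin Z (U a)" "\<And>a. a \<in> I \<Longrightarrow> openin Z (H a)"
  shows "openin Z (fibre_nbhd Z I W U H y)"
proof -
  have "openin Z (topspace Z \<inter> (\<Inter>a\<in>{a\<in>I. y \<in> W a}. H a))"
    using assms by (intro openin_Int_Inter) auto
  moreover have "openin Z (\<Union>a\<in>{a\<in>I. y \<in> W a}. U a)"
    using assms by (intro openin_Union) auto
  moreover have "fibre_nbhd Z I W U H y =
      (\<Union>a\<in>{a\<in>I. y \<in> W a}. U a) \<inter> (topspace Z \<inter> (\<Inter>a\<in>{a\<in>I. y \<in> W a}. H a))"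
    unfolding fibre_nbhd_def by (simp add: Int_ac)
  ultimately show ?thesis
    by (simp add: openin_Int)
qed

lemma fibre_subset_fibre_nbhd:
  assumes "i ` topspace X \<subseteq> topspace Z"
    and "\<And>a x. a \<in> I \<Longrightarrow> x \<in> topspace X \<Longrightarrow> i x \<in> H a \<longleftrightarrow> p x \<in> W a"
    and "\<And>x. x \<in> topspace X \<Longrightarrow> \<exists>a\<in>I. i x \<in> U a \<and> p x \<in> W a"
  shows "i ` {x \<in> topspace X. p x = y} \<subseteq> fibre_nbhd Z I W U H y"
proof clarify
  fix x assume x: "x \<in> topspace X" "y = p x"
  obtain a where "a \<in> I" "i x \<in> U a" "p x \<in> W a"
    using assms(3)[OF x(1)] by blast
  moreover have "i x \<in> H b" if "b \<in> I" "p x \<in> W b" for b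
    using assms(2)[OF that(1) x(1)] that(2) by blast
  ultimately show "i x \<in> fibre_nbhd Z I W U H (p x)"
    using assms(1) x(1) unfolding fibre_nbhd_def by blast
qed

lemma fibre_nbhd_common_point:
  assumes "\<And>a. a \<in> I \<Longrightarrow> i x \<in> H a \<longleftrightarrow> p x \<in> W a"
    and "z \<in> fibre_nbhd Z I W U H y" "i x \<in> fibre_nbhd Z I W U H y"
  shows "\<exists>a\<in>I. z \<in> U a \<and> p x \<in> W a"
proof -
  obtain a where a: "a \<in> I" "y \<in> W a" "z \<in> U a"
    using assms(2) unfolding fibre_nbhd_def by blast
  then have "i x \<in> H a"
    using assms(3) unfolding fibre_nbhd_def by blast
  then show ?thesis
    using a assms(1) by blast
qed

lemma disjoint_cozero_refinement_pullback:
  assumes g: "continuous_map Y Z g"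
    and fin: "\<And>n. n < k \<Longrightarrow> finite (A n)"
    and U: "\<And>n a. n < k \<Longrightarrow> a \<in> A n \<Longrightarrow> functionally_open Z (U n a)"
    and W: "\<And>n a. n < k \<Longrightarrow> a \<in> A n \<Longrightarrow> W n a \<in> \<omega> n \<and> functionally_open Y (W n a)"
    and disj: "\<And>n a b. n < k \<Longrightarrow> a \<in> A n \<Longrightarrow> b \<in> A n \<Longrightarrow> a \<noteq> b \<Longrightarrow> disjnt (U n a) (U n b)"
    and cover: "\<And>y. y \<in> topspace Y \<Longrightarrow> \<exists>n<k. \<exists>a\<in>A n. g y \<in> U n a \<and> y \<in> W n a"
  shows "disjoint_cozero_refinement Y k \<omega> (\<lambda>n. (\<lambda>a. {y \<in> topspace Y. g y \<in> U n a} \<inter> W n a) ` A n)"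
  unfolding disjoint_cozero_refinement_def
proof (intro conjI allI impI)
  fix n assume n: "n < k"
  show "finite ((\<lambda>a. {y \<in> topspace Y. g y \<in> U n a} \<inter> W n a) ` A n)"
    using fin n by blast
  show "\<forall>V\<in>(\<lambda>a. {y \<in> topspace Y. g y \<in> U n a} \<inter> W n a) ` A n. functionally_open Y V"
    using n U W by (auto intro!: functionally_open_Int functionally_open_preimage[OF g])
  show "pairwise disjnt ((\<lambda>a. {y \<in> topspace Y. g y \<in> U n a} \<inter> W n a) ` A n)"
    using n disj by (auto simp: pairwise_def disjnt_def)
  show "refines ((\<lambda>a. {y \<in> topspace Y. g y \<in> U n a} \<inter> W n a) ` A n) (\<omega> n)"
    using n W unfolding refines_def by fast
next
  show "topspace Y \<subseteq> \<Union>(\<Union>n<k. (\<lambda>a. {y \<in> topspace Y. g y \<in> U n a} \<inter> W n a) ` A n)"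
  proof
    fix y assume "y \<in> topspace Y"
    then obtain n a where "n < k" "a \<in> A n" "g y \<in> U n a" "y \<in> W n a"
      using cover by blast
    then show "y \<in> \<Union>(\<Union>n<k. (\<lambda>a. {y \<in> topspace Y. g y \<in> U n a} \<inter> W n a) ` A n)"
      using \<open>y \<in> topspace Y\<close> by blast
  qed
qed

lemma approx_invertible_transfer_cover:
  assumes ai: "approx_invertible X Y p Z i"
    and p: "continuous_map X Y p" "p ` topspace X = topspace Y"
    and I: "finite I"
    and UW: "\<And>a. a \<in> I \<Longrightarrow> openin Z (U a) \<and> openin Y (W a)"
    and cover: "\<And>x. x \<in> topspace X \<Longrightarrow> \<exists>a\<in>I. i x \<in> U a \<and> p x \<in> W a"
  shows "\<exists>g. continuous_map Y Z g \<and> (\<forall>y\<in>topspace Y. \<exists>a\<in>I. g y \<in> U a \<and> y \<in> W a)"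
proof -
  have emb: "embedding_map X Z i"
    and lift: "\<And>\<W>. \<forall>V\<in>\<W>. openin Z V \<Longrightarrow>
                   refines ((\<lambda>y. i ` {x \<in> topspace X. p x = y}) ` topspace Y) \<W> \<Longrightarrow>
                   \<exists>g. continuous_map Y Z g \<and> (\<forall>x\<in>topspace X. \<exists>V\<in>\<W>. {g (p x), i x} \<subseteq> V)"
    using ai unfolding approx_invertible_def C_star_embedding_def by blast+
  have "\<exists>H. openin Z H \<and> (\<forall>x\<in>topspace X. i x \<in> H \<longleftrightarrow> p x \<in> W a)" if "a \<in> I" for a
  proof -
    have "openin X {x \<in> topspace X. p x \<in> W a}"
      using UW[OF that] openin_continuous_map_preimage[OF p(1)] by blast
    then show ?thesis
      using embedding_map_openin_extend[OF emb] by (metis (no_types, lifting) mem_Collect_eq)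
  qed
  then obtain H where H: "\<And>a. a \<in> I \<Longrightarrow> openin Z (H a)"
      and HW: "\<And>a x. a \<in> I \<Longrightarrow> x \<in> topspace X \<Longrightarrow> i x \<in> H a \<longleftrightarrow> p x \<in> W a"
    by metis
  define V where "V = fibre_nbhd Z I W U H"
  have "openin Z (V y)" for y
    unfolding V_def using UW H by (intro openin_fibre_nbhd[OF I]) auto
  then have V_open: "\<forall>V'\<in>V ` topspace Y. openin Z V'"
    by blast
  have "i ` {x \<in> topspace X. p x = y} \<subseteq> V y" for y
    unfolding V_def
  proof (rule fibre_subset_fibre_nbhd[OF _ HW cover])
    show "i ` topspace X \<subseteq> topspace Z"
      using embedding_map_imp_continuous_map[OF emb] continuous_map_image_subset_topspace by blast
  qed
  then have V_fibres: "refines ((\<lambda>y. i ` {x \<in> topspace X. p x = y}) ` topspace Y) (V ` topspace Y)"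
    unfolding refines_def by blast
  obtain g where g: "continuous_map Y Z g"
      and close: "\<forall>x\<in>topspace X. \<exists>V'\<in>V ` topspace Y. {g (p x), i x} \<subseteq> V'"
    using lift[OF V_open V_fibres] by blast
  have "\<exists>a\<in>I. g y \<in> U a \<and> y \<in> W a" if y: "y \<in> topspace Y" for y
  proof -
    obtain x where x: "x \<in> topspace X" "p x = y"
      using y p(2) by (metis imageE)
    then obtain y' where "g (p x) \<in> fibre_nbhd Z I W U H y'" "i x \<in> fibre_nbhd Z I W U H y'"
      using close unfolding V_def by blast
    with HW[OF _ x(1)] have "\<exists>a\<in>I. g (p x) \<in> U a \<and> p x \<in> W a"
      by (rule fibre_nbhd_common_point[where i = i and x = x and p = p])
    with x(2) show ?thesis
      by blast
  qed
  with g show ?thesis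
    by blast
qed

lemma approx_invertible_transfer_cover_family:
  fixes k :: nat
  assumes ai: "approx_invertible X Y p Z i"
    and p: "continuous_map X Y p" "p ` topspace X = topspace Y"
    and fin: "\<And>n. n < k \<Longrightarrow> finite (A n)"
    and UW: "\<And>n a. n < k \<Longrightarrow> a \<in> A n \<Longrightarrow> openin Z (U n a) \<and> openin Y (W n a)"
    and cover: "\<And>x. x \<in> topspace X \<Longrightarrow> \<exists>n<k. \<exists>a\<in>A n. i x \<in> U n a \<and> p x \<in> W n a"
  shows "\<exists>g. continuous_map Y Z g \<and> (\<forall>y\<in>topspace Y. \<exists>n<k. \<exists>a\<in>A n. g y \<in> U n a \<and> y \<in> W n a)"
proof -
  have "\<exists>g. continuous_map Y Z g \<and>
            (\<forall>y\<in>topspace Y. \<exists>b\<in>Sigma {..<k} A. g y \<in> case_prod U b \<and> y \<in> case_prod W b)"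
  proof (rule approx_invertible_transfer_cover[OF ai p, where U = "case_prod U" and W = "case_prod W"])
    show "finite (Sigma {..<k} A)"
      using fin by (intro finite_SigmaI) auto
    show "openin Z (case_prod U b) \<and> openin Y (case_prod W b)" if b: "b \<in> Sigma {..<k} A" for b
      using b UW by auto
    show "\<exists>b\<in>Sigma {..<k} A. i x \<in> case_prod U b \<and> p x \<in> case_prod W b"
      if x: "x \<in> topspace X" for x
    proof -
      obtain n a where "n < k" "a \<in> A n" "i x \<in> U n a" "p x \<in> W n a"
        using cover[OF x] by blast
      then show ?thesis
        by (intro bexI[of _ "(n, a)"]) simp_all
    qed
  qed
  then show ?thesis
    by (auto simp: Bex_def)
qed

lemma approx_invertible_transfer_refinement:
  assumes ai: "approx_invertible X Y p Z i"
    and p: "continuous_map X Y p" "p ` topspace X = topspace Y"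
    and \<omega>: "\<And>n. \<forall>W\<in>\<omega> n. functionally_open Y W"
    and \<gamma>: "disjoint_cozero_refinement X k (\<lambda>n. (\<lambda>W. {x \<in> topspace X. p x \<in> W}) ` \<omega> n) \<gamma>"
  shows "\<exists>\<delta>. disjoint_cozero_refinement Y k \<omega> \<delta>"
proof -
  have cstar: "C_star_embedding X Z i"
    using ai unfolding approx_invertible_def by blast
  have \<gamma>n: "finite (\<gamma> n)" "\<forall>G\<in>\<gamma> n. functionally_open X G" "pairwise disjnt (\<gamma> n)"
      "\<forall>G\<in>\<gamma> n. \<exists>W\<in>\<omega> n. G \<subseteq> {x \<in> topspace X. p x \<in> W}" if "n < k" for n
    using \<gamma> that unfolding disjoint_cozero_refinement_def refines_def by auto
  obtain W where W: "\<And>n G. n < k \<Longrightarrow> G \<in> \<gamma> n \<Longrightarrow> W n G \<in> \<omega> n \<and> G \<subseteq> {x \<in> topspace X. p x \<in> W n G}"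
    using \<gamma>n(4) by metis
  obtain U where U: "\<And>n G. n < k \<Longrightarrow> G \<in> \<gamma> n \<Longrightarrow> functionally_open Z (U n G) \<and> i ` G \<subseteq> U n G
                        \<and> (\<forall>G'\<in>\<gamma> n. G' \<noteq> G \<longrightarrow> disjnt (U n G) (U n G'))"
    using C_star_embedding_extend_disjoint_cozero[OF cstar \<gamma>n(1-3)] by metis
  have X_cover: "\<exists>n<k. \<exists>G\<in>\<gamma> n. i x \<in> U n G \<and> p x \<in> W n G" if x: "x \<in> topspace X" for x
  proof -
    obtain n G where "n < k" "G \<in> \<gamma> n" "x \<in> G"
      using \<gamma> x unfolding disjoint_cozero_refinement_def by blast
    with U W show ?thesis
      by blast
  qed
  obtain g where g: "continuous_map Y Z g"
      and Y_cover: "\<And>y. y \<in> topspace Y \<Longrightarrow> \<exists>n<k. \<exists>G\<in>\<gamma> n. g y \<in> U n G \<and> y \<in> W n G"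
    using approx_invertible_transfer_cover_family[OF ai p \<gamma>n(1) _ X_cover] U W \<omega>
    by (meson functionally_open_imp_openin)
  have "disjoint_cozero_refinement Y k \<omega>
      (\<lambda>n. (\<lambda>G. {y \<in> topspace Y. g y \<in> U n G} \<inter> W n G) ` \<gamma> n)"
  proof (rule disjoint_cozero_refinement_pullback[OF g \<gamma>n(1) _ _ _ Y_cover])
    fix n G assume nG: "n < k" "G \<in> \<gamma> n"
    show "functionally_open Z (U n G)"
      using U[OF nG] by blast
    show "W n G \<in> \<omega> n \<and> functionally_open Y (W n G)"
      using W[OF nG] \<omega> by blast
    show "disjnt (U n G) (U n G')" if "G' \<in> \<gamma> n" "G \<noteq> G'" for G'
      using U[OF nG] that by blast
  qed
  then show ?thesis
    by blast
qed

theorem corollary5p3: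
  fixes X :: "'a topology" and Y :: "'b topology" and p :: "'a \<Rightarrow> 'b"
    and Z :: "'z topology" and i :: "'a \<Rightarrow> 'z"
  assumes "tychonoff_space X" and "tychonoff_space Y"
    and "continuous_map X Y p" and "p ` topspace X = topspace Y"
    and "approx_invertible X Y p Z i"
    and "finite_C_space X"
  shows "finite_C_space Y"
proof (rule finite_C_spaceI)
  fix \<omega> :: "nat \<Rightarrow> 'b set set"
  assume \<omega>: "\<And>n. cozero_cover Y (\<omega> n)"
  then have "cozero_cover X ((\<lambda>W. {x \<in> topspace X. p x \<in> W}) ` \<omega> n)" for n
    using cozero_cover_preimage[OF assms(3)] by blast
  from finite_C_spaceD[OF assms(6), where \<omega> = "\<lambda>n. (\<lambda>W. {x \<in> topspace X. p x \<in> W}) ` \<omega> n", OF this]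
  obtain k \<gamma> where
    "disjoint_cozero_refinement X k (\<lambda>n. (\<lambda>W. {x \<in> topspace X. p x \<in> W}) ` \<omega> n) \<gamma>"
    by blast
  moreover have "\<And>n. \<forall>W\<in>\<omega> n. functionally_open Y W"
    using \<omega> unfolding cozero_cover_def by blast
  ultimately show "\<exists>k \<delta>. disjoint_cozero_refinement Y k \<omega> \<delta>"
    using approx_invertible_transfer_refinement[OF assms(5,3,4)] by blast
qed

end
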